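(* For $n\ge1$ let $$\Delta_n(t)=\sum_{k=0}^{n-1}(-1)^k(2k+1)\big(t^k+t^{2n-k}\big)+(-1)^n(2n+1)t^n,$$ the Alexander polynomial of the 2-bridge knot $K([\underbrace{2,\dots,2}_{n},\underbrace{-2,\dots,-2}_{n}])$. Then no zero of $\Delta_n$ has modulus $1$. Moreover: (1) if $n$ is odd, $\Delta_n$ has exactly two real zeros and all other zeros are non-real; (2) if $n$ is even, $\Delta_n$ has no real zeros. *)

theory Defs
  imports Complex_Main "HOL-Computational_Algebra.Polynomial"
begin

definition alex_poly :: "nat \<Rightarrow> 'a::comm_ring_1 poly" where
  "alex_poly n =
     (\<Sum>k<n. smult ((-1)^k * of_nat (2*k+1)) (monom 1 k + monom 1 (2*n-k)))
     + smult ((-1)^n * of_nat (2*n+1)) (monom 1 n)"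

end

theory Submission imports Defs begin

text \<open>Multiplying by \<open>(1 + t)^2\<close> telescopes the alternating sums:
  \<open>(1 + t)^2 \<Delta>\<^sub>n(t) = (1 - t)(1 - t^(2n+1)) + 4(-1)^n t^(n+1)\<close>, while \<open>\<Delta>\<^sub>n(-1) = 2n^2 + 2n + 1\<close>.
  On the unit circle away from \<open>-1\<close> the first summand has modulus less than 4, so it cannot
  cancel the second. For real \<open>t\<close> the right-hand side equals
  \<open>(1 - (-t)^(n+1))^2 - t (1 - (-t)^n)^2\<close>, which is positive for \<open>t < 0\<close>, \<open>t \<noteq> -1\<close>. For even \<open>n\<close>
  it is also positive for \<open>t \<ge> 0\<close>. For odd \<open>n\<close> it decreases strictly on \<open>[0, 1]\<close> from 1 to
  \<open>-4\<close> and is invariant up to the factor \<open>t^(2n+2)\<close> under \<open>t \<mapsto> 1/t\<close>, so its positive zeros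
  are one \<open>r < 1\<close> and \<open>1/r\<close>.\<close>

lemma poly_alex_poly:
  "poly (alex_poly n) (z::'a::comm_ring_1) =
     (\<Sum>k<n. (-1)^k * of_nat (2*k+1) * (z^k + z^(2*n-k))) + (-1)^n * of_nat (2*n+1) * z^n"
  unfolding alex_poly_def by (simp add: poly_sum poly_monom)

lemma poly_alex_poly_of_real:
  "poly (alex_poly n) (of_real t :: 'a::{real_algebra_1,comm_ring_1}) = of_real (poly (alex_poly n) t)"
  by (simp add: poly_alex_poly)

lemma neg_one_power_mult_self: "(-1::'a::comm_ring_1)^k * (-1)^k = 1"
  by (simp add: power_add[symmetric])

lemma poly_alex_poly_neg_one: "poly (alex_poly n) (-1::'a::comm_ring_1) = of_nat (2*n*n+2*n+1)"
proof -
  have "(\<Sum>k<n. (-1)^k * of_nat (2*k+1) * ((-1::'a)^k + (-1)^(2*n-k))) = (\<Sum>k<n. of_nat (4*k+2))"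
  proof (rule sum.cong)
    fix k assume "k \<in> {..<n}"
    then have "2*n-k = k + 2*(n-k)" by auto
    then have "(-1::'a)^(2*n-k) = (-1)^k" by (simp add: power_add power_mult)
    then show "(-1)^k * of_nat (2*k+1) * ((-1::'a)^k + (-1)^(2*n-k)) = of_nat (4*k+2)"
      using neg_one_power_mult_self[of k] by (simp add: algebra_simps)
  qed simp
  also have "(\<Sum>k<n. of_nat (4*k+2)) = (of_nat (2*n*n) :: 'a)"
    by (induction n) (auto simp: algebra_simps)
  finally show ?thesis
    using neg_one_power_mult_self[of n] by (simp add: poly_alex_poly algebra_simps)
qed

lemma alex_poly_neg_one_nonzero: "poly (alex_poly n) (-1::'a::{comm_ring_1,ring_char_0}) \<noteq> 0"
  unfolding poly_alex_poly_neg_one of_nat_eq_0_iff by simp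

definition alex_numerator :: "nat \<Rightarrow> 'a::comm_ring_1 \<Rightarrow> 'a" where
  "alex_numerator n t = (1-t)*(1-t^(2*n+1)) + 4*(-1)^n*t^(n+1)"

lemma alternating_odd_sum_telescope:
  "(1+z)^2 * (\<Sum>k<n. (-1)^k * of_nat (2*k+1) * (z::'a::comm_ring_1)^k)
     = 1 - z - of_nat (2*n+1) * (-z)^n + (2*of_nat n - 1) * (-z)^(n+1)"
proof (induction n)
  case 0 then show ?case by (simp add: algebra_simps power2_eq_square)
next
  case (Suc n)
  have "(1+z)^2 * (\<Sum>k<Suc n. (-1)^k * of_nat (2*k+1) * z^k) =
     (1+z)^2 * (\<Sum>k<n. (-1)^k * of_nat (2*k+1) * z^k) + (1+z)^2 * (of_nat (2*n+1) * (-z)^n)"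
    by (simp add: algebra_simps power_minus')
  also have "\<dots> = 1 - z - of_nat (2*Suc n+1) * (-z)^Suc n + (2*of_nat (Suc n) - 1) * (-z)^(Suc n+1)"
    unfolding Suc by (simp add: algebra_simps power2_eq_square)
  finally show ?case .
qed

lemma alternating_odd_sum_reversed_telescope:
  "(1+z)^2 * (\<Sum>k<n. (-1)^k * of_nat (2*k+1) * (z::'a::comm_ring_1)^(2*n-k))
     = z^(2*n+2) - z^(2*n+1) - of_nat (2*n+1) * (-1)^n * z^(n+2) - (2*of_nat n - 1) * (-1)^n * z^(n+1)"
proof (induction n)
  case 0 then show ?case by (simp add: algebra_simps power2_eq_square)
next
  case (Suc n)
  have "(\<Sum>k<n. (-1)^k * of_nat (2*k+1) * z^(2*Suc n-k))
      = (\<Sum>k<n. z^2 * ((-1)^k * of_nat (2*k+1) * z^(2*n-k)))"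
  proof (rule sum.cong)
    fix k assume "k \<in> {..<n}"
    then have "2*Suc n - k = 2 + (2*n-k)" by auto
    then show "(-1)^k * of_nat (2*k+1) * z^(2*Suc n-k) = z^2 * ((-1)^k * of_nat (2*k+1) * z^(2*n-k))"
      by (simp add: power_add algebra_simps power2_eq_square)
  qed simp
  moreover have "2 * Suc n - n = n + 2" by simp
  ultimately have "(\<Sum>k<Suc n. (-1)^k * of_nat (2*k+1) * z^(2*Suc n-k)) =
     z^2 * (\<Sum>k<n. (-1)^k * of_nat (2*k+1) * z^(2*n-k)) + (-1)^n * of_nat (2*n+1) * z^(n+2)"
    by (simp add: sum_distrib_left)
  then have "(1+z)^2 * (\<Sum>k<Suc n. (-1)^k * of_nat (2*k+1) * z^(2*Suc n-k)) =
     z^2 * ((1+z)^2 * (\<Sum>k<n. (-1)^k * of_nat (2*k+1) * z^(2*n-k)))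
       + (1+z)^2 * ((-1)^n * of_nat (2*n+1) * z^(n+2))"
    by (simp add: algebra_simps)
  also have "\<dots> = z^(2*Suc n+2) - z^(2*Suc n+1) - of_nat (2*Suc n+1) * (-1)^Suc n * z^(Suc n+2)
       - (2*of_nat (Suc n) - 1) * (-1)^Suc n * z^(Suc n+1)"
    unfolding Suc by (simp add: algebra_simps power2_eq_square power_add)
  finally show ?case .
qed

lemma alex_poly_closed_form:
  "(1+z)^2 * poly (alex_poly n) (z::'a::comm_ring_1) = alex_numerator n z"
proof -
  have "(1+z)^2 * poly (alex_poly n) z = (1+z)^2 * (\<Sum>k<n. (-1)^k * of_nat (2*k+1) * z^k)
     + (1+z)^2 * (\<Sum>k<n. (-1)^k * of_nat (2*k+1) * z^(2*n-k)) + (1+z)^2 * ((-1)^n * of_nat (2*n+1) * z^n)"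
    by (simp add: poly_alex_poly algebra_simps sum.distrib)
  then show ?thesis
    unfolding alternating_odd_sum_telescope alternating_odd_sum_reversed_telescope alex_numerator_def
    by (simp add: algebra_simps power2_eq_square power_add power_minus')
qed

lemma alex_poly_eq_0_iff_numerator:
  fixes z :: "'a::{comm_ring_1,ring_char_0,ring_no_zero_divisors}"
  shows "poly (alex_poly n) z = 0 \<longleftrightarrow> z \<noteq> -1 \<and> alex_numerator n z = 0"
proof (cases "z = -1")
  case True
  then show ?thesis using alex_poly_neg_one_nonzero by simp
next
  case False
  then have "(1+z)^2 \<noteq> 0" by (simp add: add_eq_0_iff power2_eq_square)
  then show ?thesis
    using False alex_poly_closed_form[of z n] by (metis mult_eq_0_iff)
qed

lemma alex_numerator_sum_of_squares:
  "alex_numerator n t = (1-(-t)^(n+1))^2 - t*(1-(-t)^n)^2"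
  for t :: "'a::comm_ring_1"
proof -
  define s :: 'a where "s = (-1)^n"
  have ss: "s*(s*x) = x" for x
    unfolding s_def using neg_one_power_mult_self[of n] by (metis mult.assoc mult_1)
  have "(-t)^(n+1) = - s * t^(n+1)" "(-t)^n = s * t^n"
    unfolding s_def by (simp_all add: power_minus')
  moreover have "t^(2*n+1) = t*t^n*t^n" "t^(n+1) = t*t^n"
    by (simp_all add: power_add mult_2)
  ultimately show ?thesis
    unfolding alex_numerator_def s_def[symmetric]
    by (simp add: power2_eq_square algebra_simps ss)
qed

lemma norm_one_minus_lt_2:
  assumes "cmod z = 1" "z \<noteq> -1"
  shows "cmod (1 - z) < 2"
proof -
  have circle: "(Re z)^2 + (Im z)^2 = 1"
    using assms(1) by (metis cmod_power2 one_power2)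
  have "Re z \<noteq> -1"
    using circle assms(2) by (auto simp: complex_eq_iff)
  moreover have "Re z \<ge> -1"
    using abs_Re_le_cmod[of z] assms(1) by linarith
  ultimately have "Re z > -1" by simp
  have "(cmod (1-z))^2 = (1 - Re z)^2 + (Im z)^2"
    by (simp add: cmod_power2)
  also have "\<dots> = 2 - 2 * Re z"
    using circle by (simp add: power2_eq_square algebra_simps)
  finally have "(cmod (1-z))^2 = 2 - 2 * Re z" .
  with \<open>Re z > -1\<close> have "(cmod (1-z))^2 < 2^2" by simp
  then show ?thesis by (rule power_less_imp_less_base) simp
qed

lemma alex_poly_no_unimodular_roots:
  assumes "cmod z = 1"
  shows "poly (alex_poly n) z \<noteq> 0"
proof
  assume "poly (alex_poly n) z = 0"
  then have "z \<noteq> -1" and "(1-z)*(1-z^(2*n+1)) = - (4*(-1)^n*z^(n+1))"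
    unfolding alex_poly_eq_0_iff_numerator alex_numerator_def by (simp_all add: eq_neg_iff_add_eq_0)
  have "4 = cmod (4*(-1)^n*z^(n+1))"
    using assms by (simp add: norm_mult norm_power)
  also have "\<dots> = cmod (1-z) * cmod (1-z^(2*n+1))"
    using \<open>(1-z)*(1-z^(2*n+1)) = _\<close> by (simp only: norm_minus_cancel flip: norm_mult)
  also have "\<dots> \<le> cmod (1-z) * 2"
    using norm_triangle_ineq4[of 1 "z^(2*n+1)"] norm_power[of z "2*n+1"] assms
    by (intro mult_left_mono) simp_all
  also have "\<dots> < 4"
    using norm_one_minus_lt_2[OF assms \<open>z \<noteq> -1\<close>] by simp
  finally show False by simp
qed

lemma real_roots_alex_poly_complex:
  "{z::complex. poly (alex_poly n) z = 0 \<and> z \<in> \<real>} = of_real ` {t. poly (alex_poly n) t = 0}"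
  by (auto simp: poly_alex_poly_of_real elim!: Reals_cases)

lemma alex_numerator_neg_nonzero:
  fixes t :: real
  assumes "t < 0" "t \<noteq> -1"
  shows "alex_numerator n t \<noteq> 0"
proof
  assume "alex_numerator n t = 0"
  then have sum0: "(1-(-t)^(n+1))^2 + (-t)*(1-(-t)^n)^2 = 0"
    unfolding alex_numerator_sum_of_squares by simp
  have "0 \<le> (1-(-t)^(n+1))^2" by simp
  moreover have "0 \<le> (-t)*(1-(-t)^n)^2" using assms by (intro mult_nonneg_nonneg) auto
  ultimately have "(1-(-t)^(n+1))^2 = 0" and "(-t)*(1-(-t)^n)^2 = 0"
    using sum0 by linarith+
  then have "(-t)^(n+1) = 1" and "(-t)^n = 1" using assms by simp_all
  then show False using assms by simp
qed

lemma one_minus_mult_one_minus_power_nonneg: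
  fixes t :: real
  assumes "0 \<le> t"
  shows "0 \<le> (1-t)*(1-t^m)"
proof (cases "t \<le> 1")
  case True then show ?thesis using power_le_one[OF assms True] by simp
next
  case False then show ?thesis using one_le_power[of t m] by (simp add: mult_nonpos_nonpos)
qed

lemma alex_numerator_even_pos:
  fixes t :: real
  assumes "even n" "0 \<le> t"
  shows "alex_numerator n t > 0"
proof (cases "t = 0")
  case True then show ?thesis by (simp add: alex_numerator_def)
next
  case False
  have "0 \<le> (1-t)*(1-t^(2*n+1))"
    using one_minus_mult_one_minus_power_nonneg[OF assms(2)] .
  moreover have "0 < 4*t^(n+1)" using assms False by simp
  ultimately show ?thesis using assms(1) by (simp add: alex_numerator_def)
qed

lemma alex_numerator_odd_strict_antimono:
  fixes a b :: real
  assumes "odd n" "0 \<le> a" "a < b" "b \<le> 1"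
  shows "alex_numerator n b < alex_numerator n a"
proof -
  have "(1-b)*(1-b^(2*n+1)) \<le> (1-a)*(1-a^(2*n+1))"
  proof (rule mult_mono)
    show "1 - b^(2*n+1) \<le> 1 - a^(2*n+1)" using assms power_mono[of a b "2*n+1"] by simp
    show "0 \<le> 1 - b^(2*n+1)" using assms power_le_one[of b "2*n+1"] by simp
  qed (use assms in auto)
  moreover have "a^(n+1) < b^(n+1)" using assms power_strict_mono[of a b "n+1"] by simp
  ultimately show ?thesis using assms(1) by (simp add: alex_numerator_def)
qed

lemma alex_numerator_reciprocal:
  fixes t :: real
  assumes "t \<noteq> 0"
  shows "alex_numerator n t = t^(2*n+2) * alex_numerator n (1/t)"
proof -
  have "t^(2*n+2) = t * t^(2*n+1)" "t^(2*n+2) = t^(n+1) * t^(n+1)"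
    by (simp_all add: power_add[symmetric] mult_2)
  then show ?thesis
    using assms by (simp add: alex_numerator_def field_simps power_one_over)
qed

lemma alex_numerator_odd_root:
  fixes n :: nat
  assumes "odd n"
  obtains r :: real where "0 < r" "r < 1" "alex_numerator n r = 0"
proof -
  have "\<exists>r. 0 \<le> r \<and> r \<le> 1 \<and> alex_numerator n r = (0::real)"
    by (rule IVT2') (use assms in \<open>auto simp: alex_numerator_def intro!: continuous_intros\<close>)
  then obtain r :: real where "0 \<le> r" "r \<le> 1" "alex_numerator n r = 0" by blast
  moreover have "r \<noteq> 0" "r \<noteq> 1"
    using \<open>alex_numerator n r = 0\<close> assms by (auto simp: alex_numerator_def)
  ultimately show ?thesis using that[of r] by simp
qed

lemma real_roots_alex_poly_even:
  assumes "even n"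
  shows "poly (alex_poly n) (t::real) \<noteq> 0"
  using alex_numerator_neg_nonzero[of t n] alex_numerator_even_pos[OF assms, of t]
  by (cases "t < 0") (auto simp: alex_poly_eq_0_iff_numerator)

lemma real_roots_alex_poly_odd:
  assumes "odd n"
  obtains r :: real where "0 < r" "r < 1" "{t. poly (alex_poly n) t = 0} = {r, 1/r}"
proof -
  obtain r :: real where r: "0 < r" "r < 1" "alex_numerator n r = 0"
    using alex_numerator_odd_root[OF assms] .
  have unique: "u = r" if "0 < u" "u \<le> 1" "alex_numerator n u = 0" for u
    using alex_numerator_odd_strict_antimono[OF assms, of u r]
      alex_numerator_odd_strict_antimono[OF assms, of r u] that r
    by (cases u r rule: linorder_cases) auto
  have reciprocal_0: "alex_numerator n (1/t) = 0 \<longleftrightarrow> alex_numerator n t = 0" if "0 < t" for t :: real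
    using alex_numerator_reciprocal[of t n] that by simp
  have "1 < 1/r" using r by simp
  have "alex_numerator n t = 0 \<longleftrightarrow> t = r \<or> t = 1/r" if "0 < t" for t :: real
  proof (cases "t \<le> 1")
    case True
    then show ?thesis using that r unique[of t] \<open>1 < 1/r\<close> by auto
  next
    case False
    then have "alex_numerator n t = 0 \<longleftrightarrow> 1/t = r"
      using that r unique[of "1/t"] reciprocal_0[of t] by auto
    then show ?thesis using False r by (auto simp: field_simps)
  qed
  moreover have "alex_numerator n t \<noteq> 0" if "t \<le> 0" "t \<noteq> -1" for t :: real
    using that alex_numerator_neg_nonzero[of t n] by (cases "t = 0") (auto simp: alex_numerator_def)
  ultimately have "{t. poly (alex_poly n) t = 0} = {r, 1/r}"
    using r by (auto simp: alex_poly_eq_0_iff_numerator) (smt (verit) divide_pos_pos)+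
  with r show ?thesis using that by blast
qed

theorem theoremC4:
  fixes n :: nat
  assumes "n \<ge> 1"
  shows "(\<forall>z::complex. poly (alex_poly n) z = 0 \<longrightarrow> cmod z \<noteq> 1)
       \<and> (odd n \<longrightarrow> card {z::complex. poly (alex_poly n) z = 0 \<and> z \<in> \<real>} = 2)
       \<and> (even n \<longrightarrow> (\<forall>z::complex. poly (alex_poly n) z = 0 \<longrightarrow> z \<notin> \<real>))"
proof (intro conjI impI allI)
  fix z :: complex
  show "poly (alex_poly n) z = 0 \<Longrightarrow> cmod z \<noteq> 1"
    using alex_poly_no_unimodular_roots by blast
next
  assume "odd n"
  then obtain r :: real where r: "0 < r" "r < 1" and roots: "{t. poly (alex_poly n) t = 0} = {r, 1/r}"
    by (rule real_roots_alex_poly_odd)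
  have "1 < 1/r" using r by simp
  with r have "r \<noteq> 1/r" by linarith
  then have "card (of_real ` {r, 1/r} :: complex set) = 2"
    by (subst card_image) (simp_all add: inj_on_def del: of_real_divide)
  then show "card {z::complex. poly (alex_poly n) z = 0 \<and> z \<in> \<real>} = 2"
    unfolding real_roots_alex_poly_complex roots .
next
  fix z :: complex
  assume "even n"
  then show "poly (alex_poly n) z = 0 \<Longrightarrow> z \<notin> \<real>"
    using real_roots_alex_poly_complex[of n] real_roots_alex_poly_even[of n] by blast
qed

end
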